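(* Let $R$ be an order in a quadratic number field. Then $R$ is super-multiplicative: for every pair of non-zero ideals $I,J$ of $R$ one has $N(IJ)\geq N(I)N(J)$.
   Context: An order in a number field $K$ is a subring of $K$ with fraction field $K$ whose additive group is finitely generated; a quadratic number field is a number field of degree $2$ over $\mathbb{Q}$. For a non-zero ideal $I$ of $R$, $N(I)=[R:I]$ is its index as an additive subgroup. A ring is super-multiplicative if for all ideals $I,J$ with $[R:IJ]$ finite one has $N(IJ)\geq N(I)N(J)$. *)

theory Defs
  imports Complex_Main
begin

text \<open>Every number field embeds into the complex numbers, so we model a quadratic
number field as a subfield K of the complex numbers of degree 2 over the rationals,
i.e. with Q-basis 1, w for some w in K not rational.\<close>

definition quadratic_field :: "complex set \<Rightarrow> bool" where
  "quadratic_field K \<longleftrightarrow>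
     0 \<in> K \<and> 1 \<in> K \<and>
     (\<forall>x\<in>K. \<forall>y\<in>K. x + y \<in> K \<and> x * y \<in> K) \<and>
     (\<forall>x\<in>K. - x \<in> K) \<and>
     (\<forall>x\<in>K. x \<noteq> 0 \<longrightarrow> inverse x \<in> K) \<and>
     (\<exists>w\<in>K. w \<notin> \<rat> \<and> K = {of_rat a + of_rat b * w | a b. True})"

definition is_order :: "complex set \<Rightarrow> complex set \<Rightarrow> bool" where
  "is_order K R \<longleftrightarrow>
     R \<subseteq> K \<and> 0 \<in> R \<and> 1 \<in> R \<and>
     (\<forall>x\<in>R. \<forall>y\<in>R. x + y \<in> R \<and> x * y \<in> R) \<and>
     (\<forall>x\<in>R. - x \<in> R) \<and>
     (\<forall>x\<in>K. \<exists>a\<in>R. \<exists>b\<in>R. b \<noteq> 0 \<and> x = a / b) \<and>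
     (\<exists>S. finite S \<and> S \<subseteq> R \<and>
          R = {(\<Sum>s\<in>S. of_int (c s) * s) | c. True})"

definition ring_ideal :: "complex set \<Rightarrow> complex set \<Rightarrow> bool" where
  "ring_ideal R I \<longleftrightarrow>
     I \<subseteq> R \<and> 0 \<in> I \<and>
     (\<forall>x\<in>I. \<forall>y\<in>I. x + y \<in> I) \<and>
     (\<forall>r\<in>R. \<forall>x\<in>I. r * x \<in> I)"

definition ideal_mult :: "complex set \<Rightarrow> complex set \<Rightarrow> complex set" where
  "ideal_mult I J =
     {(\<Sum>k<(n::nat). x k * y k) | n x y. \<forall>k<n. x k \<in> I \<and> y k \<in> J}"

definition ideal_norm :: "complex set \<Rightarrow> complex set \<Rightarrow> nat" where
  "ideal_norm R I = card ((\<lambda>x. (\<lambda>i. x + i) ` I) ` R)"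

end

(*
  Every order R in a quadratic field is Z[w] = Z + Z w for some irrational w with
  w^2 + p w + q = 0: with respect to a Q-basis 1, w0 of the field the elements of R
  have bounded denominators, the rational elements of R are integers (their powers
  have bounded denominators too), and the w0-coordinates of R form a cyclic group.

  In Z[w] every nonzero ideal has a Hermite basis c alpha, c (beta + w) with alpha
  dividing the norm of beta + w, and its index is the determinant c^2 alpha of that
  basis. If I and J have such bases, IJ lies in the additive group generated by the
  four products of basis elements, and a direct computation shows that N(I) N(J)
  divides all 2x2 determinants of the coordinate vectors of these products, hence
  of any two elements of IJ. Applied to a Hermite basis of IJ this gives
  N(I) N(J) | N(IJ).
*)

theory Submission
  imports Defs "HOL-Computational_Algebra.Group_Closure"
begin

section \<open>Additive subgroups and products of ideals\<close>

definition add_subgroup :: "'a::ab_group_add set \<Rightarrow> bool" where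
  "add_subgroup L \<longleftrightarrow> 0 \<in> L \<and> (\<forall>x\<in>L. \<forall>y\<in>L. x - y \<in> L)"

lemma add_subgroup_group_closure: "add_subgroup (group_closure S)"
  unfolding add_subgroup_def by (auto intro: group_closure.diff)

lemma group_closure_least:
  assumes "add_subgroup L" and "S \<subseteq> L"
  shows "group_closure S \<subseteq> L"
proof
  fix x assume "x \<in> group_closure S"
  then show "x \<in> L"
    by induction (use assms in \<open>auto simp: add_subgroup_def\<close>)
qed

lemma group_closure_eq_self: "add_subgroup L \<Longrightarrow> group_closure L = L"
  by (auto intro: group_closure.base dest: group_closure_least[of L L])

lemma add_subgroup_add: "add_subgroup L \<Longrightarrow> x \<in> L \<Longrightarrow> y \<in> L \<Longrightarrow> x + y \<in> L"
  by (metis group_closure_add group_closure_eq_self)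

lemma add_subgroup_diff: "add_subgroup L \<Longrightarrow> x \<in> L \<Longrightarrow> y \<in> L \<Longrightarrow> x - y \<in> L"
  by (simp add: add_subgroup_def)

lemma group_closure_of_int_mult:
  fixes s :: "'a::comm_ring_1"
  assumes "s \<in> group_closure S"
  shows "of_int k * s \<in> group_closure S"
proof (cases "k \<ge> 0")
  case True
  then show ?thesis
    using group_closure_scalar_mult_left[OF assms, of "nat k"] by simp
next
  case False
  then show ?thesis
    using group_closure_scalar_mult_left[OF assms, of "nat (- k)"] by simp
qed

lemma add_subgroup_of_int_mult:
  fixes x :: "'a::comm_ring_1"
  shows "add_subgroup L \<Longrightarrow> x \<in> L \<Longrightarrow> of_int k * x \<in> L"
  by (metis group_closure_of_int_mult group_closure_eq_self)

lemma add_subgroup_int_eq_multiples: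
  fixes G :: "int set"
  assumes "add_subgroup G"
  shows "G = range (times (Gcd G))"
  using group_closure_eq[of G] group_closure_eq_self[OF assms] by simp

lemma add_subgroup_sum:
  assumes "add_subgroup L" and "\<And>i. i \<in> A \<Longrightarrow> f i \<in> L"
  shows "sum f A \<in> L"
  using assms(2)
  by (induction A rule: infinite_finite_induct)
    (use assms(1) in \<open>auto simp: add_subgroup_def intro: add_subgroup_add\<close>)

lemma mult_mem_ideal_mult: "x \<in> I \<Longrightarrow> y \<in> J \<Longrightarrow> x * y \<in> ideal_mult I J"
  unfolding ideal_mult_def by (rule CollectI, rule exI[of _ 1]) auto

lemma ideal_mult_subset:
  assumes "add_subgroup L" and "\<And>x y. x \<in> I \<Longrightarrow> y \<in> J \<Longrightarrow> x * y \<in> L"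
  shows "ideal_mult I J \<subseteq> L"
  unfolding ideal_mult_def by (auto intro!: add_subgroup_sum[OF assms(1)] assms(2))

lemma ideal_mult_subset_group_closure:
  assumes "I \<subseteq> group_closure G" and "J \<subseteq> group_closure H"
  shows "ideal_mult I J \<subseteq> group_closure {g * h | g h. g \<in> G \<and> h \<in> H}"
    (is "_ \<subseteq> ?P")
proof (rule ideal_mult_subset[OF add_subgroup_group_closure])
  have "x * y \<in> ?P" if x: "x \<in> group_closure G" and y: "y \<in> group_closure H" for x y
    using x
  proof induction
    case (base x)
    from y show ?case
    proof induction
      case (base y)
      then have "x * y = 0 \<or> x * y \<in> {g * h | g h. g \<in> G \<and> h \<in> H}"
        using \<open>x \<in> insert 0 G\<close> by auto
      then show ?case
        by (auto intro: group_closure.base)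
    next
      case (diff s t)
      then show ?case
        using group_closure.diff[of "x * s" _ "x * t"] by (simp add: right_diff_distrib)
    qed
  next
    case (diff s t)
    then show ?case
      using group_closure.diff[of "s * y" _ "t * y"] by (simp add: left_diff_distrib)
  qed
  then show "x * y \<in> ?P" if "x \<in> I" "y \<in> J" for x y
    using that assms by blast
qed

lemma ideal_mult_add_closed:
  assumes "z \<in> ideal_mult I J" and "z' \<in> ideal_mult I J"
  shows "z + z' \<in> ideal_mult I J"
proof -
  obtain n :: nat and x y where z: "z = (\<Sum>k<n. x k * y k)" and xy: "\<forall>k<n. x k \<in> I \<and> y k \<in> J"
    using assms(1) unfolding ideal_mult_def by blast
  obtain m :: nat and x' y' where z': "z' = (\<Sum>k<m. x' k * y' k)" and xy': "\<forall>k<m. x' k \<in> I \<and> y' k \<in> J"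
    using assms(2) unfolding ideal_mult_def by blast
  define X where "X k = (if k < n then x k else x' (k - n))" for k
  define Y where "Y k = (if k < n then y k else y' (k - n))" for k
  have "(\<Sum>k<n + l. X k * Y k) = z + (\<Sum>k<l. x' k * y' k)" for l
    by (induction l) (simp_all add: z X_def Y_def)
  moreover have "\<forall>k<n + m. X k \<in> I \<and> Y k \<in> J"
    using xy xy' by (auto simp: X_def Y_def)
  ultimately show ?thesis
    unfolding ideal_mult_def z' by (intro CollectI exI conjI) (rule sym)
qed

lemma ideal_mult_neq_zero:
  assumes "ring_ideal R I" "I \<noteq> {0}" "ring_ideal R J" "J \<noteq> {0}"
  shows "ideal_mult I J \<noteq> {0}"
proof -
  obtain x y where "x \<in> I" "x \<noteq> 0" "y \<in> J" "y \<noteq> 0"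
    using assms unfolding ring_ideal_def by blast
  then have "x * y \<in> ideal_mult I J" "x * y \<noteq> 0"
    by (simp_all add: mult_mem_ideal_mult)
  then show ?thesis
    by blast
qed

lemma ring_ideal_ideal_mult:
  assumes "0 \<in> R" and "\<And>x y. x \<in> R \<Longrightarrow> y \<in> R \<Longrightarrow> x + y \<in> R \<and> x * y \<in> R"
    and I: "ring_ideal R I" and J: "ring_ideal R J"
  shows "ring_ideal R (ideal_mult I J)"
  unfolding ring_ideal_def
proof (intro conjI ballI)
  show "0 \<in> ideal_mult I J"
    unfolding ideal_mult_def by (rule CollectI, rule exI[of _ 0]) simp
  have "(\<Sum>k<n. x k * y k) \<in> R" if "\<forall>k<n. x k \<in> I \<and> y k \<in> J" for n :: nat and x y
    using that I J assms(1,2) by (induction n) (auto simp: ring_ideal_def subset_iff)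
  then show "ideal_mult I J \<subseteq> R"
    unfolding ideal_mult_def by blast
  show "z + z' \<in> ideal_mult I J" if "z \<in> ideal_mult I J" "z' \<in> ideal_mult I J" for z z'
    using that by (rule ideal_mult_add_closed)
  show "r * z \<in> ideal_mult I J" if "r \<in> R" "z \<in> ideal_mult I J" for r z
  proof -
    obtain n :: nat and x y where z: "z = (\<Sum>k<n. x k * y k)" and xy: "\<forall>k<n. x k \<in> I \<and> y k \<in> J"
      using \<open>z \<in> ideal_mult I J\<close> unfolding ideal_mult_def by blast
    have "r * z = (\<Sum>k<n. (r * x k) * y k)"
      unfolding z by (simp add: sum_distrib_left mult.assoc)
    moreover have "\<forall>k<n. r * x k \<in> I \<and> y k \<in> J"
      using xy I \<open>r \<in> R\<close> unfolding ring_ideal_def by blast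
    ultimately show ?thesis
      unfolding ideal_mult_def by (intro CollectI exI[of _ n] exI[of _ "\<lambda>k. r * x k"] exI[of _ y]) simp
  qed
qed

lemma coset_eq_iff:
  assumes "add_subgroup L"
  shows "(+) z ` L = (+) z' ` L \<longleftrightarrow> z - z' \<in> L"
proof
  assume "(+) z ` L = (+) z' ` L"
  moreover have "z \<in> (+) z ` L"
    using assms by (force simp: add_subgroup_def)
  ultimately show "z - z' \<in> L"
    by auto
next
  assume "z - z' \<in> L"
  then have "z' - z \<in> L"
    using add_subgroup_diff[OF assms, of 0 "z - z'"] assms by (simp add: add_subgroup_def)
  have "(+) z ` L \<subseteq> (+) z' ` L" if d: "d \<in> L" and z: "z = z' + d" for z z' d
  proof
    fix u assume "u \<in> (+) z ` L"
    then obtain t where "t \<in> L" "u = z' + (d + t)"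
      using z by (auto simp: add.assoc)
    then show "u \<in> (+) z' ` L"
      using add_subgroup_add[OF assms d] by blast
  qed
  with \<open>z - z' \<in> L\<close> \<open>z' - z \<in> L\<close> show "(+) z ` L = (+) z' ` L"
    by (metis add_diff_cancel_left' diff_add_cancel subset_antisym)
qed

lemma of_rat_coords_eq_iff:
  fixes w :: "'a::field_char_0"
  assumes "w \<notin> \<rat>"
  shows "of_rat a + of_rat b * w = of_rat a' + of_rat b' * w \<longleftrightarrow> a = a' \<and> b = b'"
proof
  assume eq: "of_rat a + of_rat b * w = of_rat a' + of_rat b' * w"
  have "b = b'"
  proof (rule ccontr)
    assume "b \<noteq> b'"
    with eq have "w = of_rat ((a' - a) / (b - b'))"
      by (simp add: of_rat_diff of_rat_divide field_simps)
    with assms show False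
      by simp
  qed
  with eq show "a = a' \<and> b = b'"
    by simp
qed simp

section \<open>Ideals of orders of the form \<int>[w]\<close>

locale quadratic_order =
  fixes R :: "complex set" and w :: complex and p q :: int
  assumes R_eq: "R = {of_int x + of_int y * w | x y. True}"
    and w_irrational: "w \<notin> \<rat>"
    and w_root: "w\<^sup>2 + of_int p * w + of_int q = 0"
begin

definition zw :: "int \<Rightarrow> int \<Rightarrow> complex" where
  "zw x y = of_int x + of_int y * w"

lemma R_eq_zw: "R = {zw x y | x y. True}"
  unfolding R_eq zw_def ..

lemma zw_in_R [simp]: "zw x y \<in> R"
  unfolding R_eq_zw by blast

lemma zw_eq_iff: "zw x y = zw x' y' \<longleftrightarrow> x = x' \<and> y = y'"
  using of_rat_coords_eq_iff[OF w_irrational, of "of_int x" "of_int y" "of_int x'" "of_int y'"]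
  unfolding zw_def by simp

lemma zw_0_0 [simp]: "zw 0 0 = 0"
  unfolding zw_def by simp

lemma zw_eq_0_iff: "zw x y = 0 \<longleftrightarrow> x = 0 \<and> y = 0"
  using zw_eq_iff[of x y 0 0] by simp

lemma zw_of_int: "zw k 0 = of_int k"
  unfolding zw_def by simp

lemma zw_diff: "zw x y - zw x' y' = zw (x - x') (y - y')"
  unfolding zw_def by (simp add: algebra_simps)

lemma zw_add: "zw x y + zw x' y' = zw (x + x') (y + y')"
  unfolding zw_def by (simp add: algebra_simps)

lemma of_int_mult_zw: "of_int k * zw x y = zw (k * x) (k * y)"
  unfolding zw_def by (simp add: algebra_simps)

lemma zw_mult: "zw x y * zw x' y' = zw (x * x' - q * y * y') (x * y' + y * x' - p * y * y')"
proof -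
  have "w * w = (w\<^sup>2 + of_int p * w + of_int q) - of_int p * w - of_int q"
    by (simp add: power2_eq_square)
  also have "\<dots> = - of_int p * w - of_int q"
    using w_root by simp
  finally have w_square: "w * w = - of_int p * w - of_int q" .
  have "zw x y * zw x' y' = of_int (x * x') + of_int (x * y' + y * x') * w + of_int (y * y') * (w * w)"
    unfolding zw_def by (simp add: algebra_simps)
  then show ?thesis
    unfolding w_square zw_def by (simp add: algebra_simps)
qed

lemma R_cases [elim]:
  assumes "z \<in> R"
  obtains x y where "z = zw x y"
  using assms unfolding R_eq_zw by blast

lemma add_subgroup_R: "add_subgroup R"
  unfolding add_subgroup_def by (auto elim!: R_cases simp: zw_diff simp flip: zw_0_0)

lemma mult_in_R: "z \<in> R \<Longrightarrow> z' \<in> R \<Longrightarrow> z * z' \<in> R"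
  by (auto elim!: R_cases simp: zw_mult)

lemma ideal_add_subgroup:
  assumes "ring_ideal R I"
  shows "add_subgroup I"
  unfolding add_subgroup_def
proof (intro conjI ballI)
  show "0 \<in> I"
    using assms by (simp add: ring_ideal_def)
  show "x - y \<in> I" if "x \<in> I" "y \<in> I" for x y
    using assms that zw_in_R[of "-1" 0] unfolding ring_ideal_def
    by (metis diff_conv_add_uminus mult_minus1 of_int_minus of_int_1 zw_of_int)
qed

lemma ideal_zw_mult:
  assumes "ring_ideal R I" and "z \<in> I"
  shows "zw x y * z \<in> I"
  using assms by (simp add: ring_ideal_def)

text \<open>The determinant of the coordinate vectors of two elements of R with respect to
  the basis 1, w; its value elsewhere is unspecified.\<close>

definition coord_det :: "complex \<Rightarrow> complex \<Rightarrow> int" where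
  "coord_det z z' = (THE d. \<exists>x y x' y'. z = zw x y \<and> z' = zw x' y' \<and> d = x * y' - y * x')"

lemma coord_det_zw [simp]: "coord_det (zw x y) (zw x' y') = x * y' - y * x'"
  unfolding coord_det_def by (rule the_equality) (auto simp: zw_eq_iff)

lemma coord_det_diff_left:
  assumes "z1 \<in> R" "z2 \<in> R" "z' \<in> R"
  shows "coord_det (z1 - z2) z' = coord_det z1 z' - coord_det z2 z'"
  using assms by (auto elim!: R_cases simp: zw_diff algebra_simps)

lemma coord_det_diff_right:
  assumes "z \<in> R" "z1 \<in> R" "z2 \<in> R"
  shows "coord_det z (z1 - z2) = coord_det z z1 - coord_det z z2"
  using assms by (auto elim!: R_cases simp: zw_diff algebra_simps)

lemma coord_det_swap:
  assumes "z \<in> R" "z' \<in> R"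
  shows "coord_det z' z = - coord_det z z'"
  using assms by (auto elim!: R_cases)

lemma coord_det_0_left:
  assumes "z' \<in> R"
  shows "coord_det 0 z' = 0"
  using assms by (auto elim!: R_cases simp flip: zw_0_0)

lemma coord_det_0_right:
  assumes "z \<in> R"
  shows "coord_det z 0 = 0"
  using assms by (auto elim!: R_cases simp flip: zw_0_0)

lemma dvd_coord_det_group_closure:
  assumes G: "G \<subseteq> R" and dvd_G: "\<And>g h. g \<in> G \<Longrightarrow> h \<in> G \<Longrightarrow> D dvd coord_det g h"
    and z: "z \<in> group_closure G" and z': "z' \<in> group_closure G"
  shows "D dvd coord_det z z'"
proof -
  have closure_R: "group_closure G \<subseteq> R"
    by (rule group_closure_least[OF add_subgroup_R G])
  have dvd_left: "D dvd coord_det z h" if "z \<in> group_closure G" "h \<in> G" for z h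
    using that(1)
  proof induction
    case (base z)
    with G that(2) show ?case
      using dvd_G by (auto simp: coord_det_0_left)
  next
    case (diff s t)
    with closure_R G that(2) have "coord_det (s - t) h = coord_det s h - coord_det t h"
      by (auto intro: coord_det_diff_left)
    with diff show ?case
      by simp
  qed
  from z' show ?thesis
  proof induction
    case (base z')
    with G closure_R z show ?case
      using dvd_left[of z z'] by (auto simp: coord_det_0_right)
  next
    case (diff s t)
    with closure_R z have "coord_det z (s - t) = coord_det z s - coord_det z t"
      by (auto intro: coord_det_diff_right)
    with diff show ?case
      by simp
  qed
qed

definition hnf_lattice :: "int \<Rightarrow> int \<Rightarrow> int \<Rightarrow> complex set" where
  "hnf_lattice a b c = {zw (m * a + n * b) (n * c) | m n. True}"

lemma zw_in_hnf_lattice_iff: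
  "zw x y \<in> hnf_lattice a b c \<longleftrightarrow> (\<exists>m n. x = m * a + n * b \<and> y = n * c)"
  unfolding hnf_lattice_def by (auto simp: zw_eq_iff)

lemma add_subgroup_hnf_lattice: "add_subgroup (hnf_lattice a b c)"
  unfolding add_subgroup_def
proof (intro conjI ballI)
  have "0 = zw (0 * a + 0 * b) (0 * c)"
    by simp
  then show "0 \<in> hnf_lattice a b c"
    unfolding hnf_lattice_def by blast
  show "z - z' \<in> hnf_lattice a b c"
    if z: "z \<in> hnf_lattice a b c" and z': "z' \<in> hnf_lattice a b c" for z z'
  proof -
    obtain m n m' n' where "z = zw (m * a + n * b) (n * c)" "z' = zw (m' * a + n' * b) (n' * c)"
      using z z' unfolding hnf_lattice_def by blast
    then have "z - z' = zw ((m - m') * a + (n - n') * b) ((n - n') * c)"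
      by (simp add: zw_diff algebra_simps)
    then show ?thesis
      unfolding hnf_lattice_def by blast
  qed
qed

lemma hnf_lattice_subset_group_closure:
  "hnf_lattice a b c \<subseteq> group_closure {zw a 0, zw b c}"
proof
  fix z assume "z \<in> hnf_lattice a b c"
  then obtain m n where "z = of_int m * zw a 0 + of_int n * zw b c"
    unfolding hnf_lattice_def by (auto simp: of_int_mult_zw zw_add)
  then show "z \<in> group_closure {zw a 0, zw b c}"
    by (simp add: group_closure_add group_closure_of_int_mult group_closure.base)
qed

lemma zw_cosets_hnf_lattice_eq_iff:
  "(+) (zw i j) ` hnf_lattice a b c = (+) (zw i' j') ` hnf_lattice a b c
    \<longleftrightarrow> (\<exists>m n. i - i' = m * a + n * b \<and> j - j' = n * c)"
  unfolding coset_eq_iff[OF add_subgroup_hnf_lattice] zw_diff zw_in_hnf_lattice_iff ..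

lemma hnf_lattice_cosets_eq:
  assumes "a > 0" and "c > 0"
  shows "(\<lambda>z. (+) z ` hnf_lattice a b c) ` R
    = (\<lambda>(i, j). (+) (zw i j) ` hnf_lattice a b c) ` ({0..<a} \<times> {0..<c})"
proof
  show "(\<lambda>(i, j). (+) (zw i j) ` hnf_lattice a b c) ` ({0..<a} \<times> {0..<c})
      \<subseteq> (\<lambda>z. (+) z ` hnf_lattice a b c) ` R"
    by auto
  show "(\<lambda>z. (+) z ` hnf_lattice a b c) ` R
      \<subseteq> (\<lambda>(i, j). (+) (zw i j) ` hnf_lattice a b c) ` ({0..<a} \<times> {0..<c})"
  proof
    fix C assume "C \<in> (\<lambda>z. (+) z ` hnf_lattice a b c) ` R"
    then obtain x y where C: "C = (+) (zw x y) ` hnf_lattice a b c"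
      by auto
    define n where "n = y div c"
    define m where "m = (x - n * b) div a"
    have "C = (+) (zw ((x - n * b) mod a) (y mod c)) ` hnf_lattice a b c"
      unfolding C zw_cosets_hnf_lattice_eq_iff
      by (rule exI[of _ m], rule exI[of _ n])
        (simp add: m_def n_def minus_mod_eq_mult_div algebra_simps)
    moreover have "((x - n * b) mod a, y mod c) \<in> {0..<a} \<times> {0..<c}"
      using assms by simp
    ultimately show "C \<in> (\<lambda>(i, j). (+) (zw i j) ` hnf_lattice a b c) ` ({0..<a} \<times> {0..<c})"
      by force
  qed
qed

lemma inj_on_hnf_lattice_cosets:
  "inj_on (\<lambda>(i, j). (+) (zw i j) ` hnf_lattice a b c) ({0..<a} \<times> {0..<c})"
proof (rule inj_onI)
  fix u v assume "u \<in> {0..<a} \<times> {0..<c}" "v \<in> {0..<a} \<times> {0..<c}"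
    and "(\<lambda>(i, j). (+) (zw i j) ` hnf_lattice a b c) u = (\<lambda>(i, j). (+) (zw i j) ` hnf_lattice a b c) v"
  moreover obtain i j i' j' where uv: "u = (i, j)" "v = (i', j')"
    by fastforce
  ultimately obtain m n where mn: "i - i' = m * a + n * b" "j - j' = n * c"
    and bounds: "0 \<le> i" "i < a" "0 \<le> i'" "i' < a" "0 \<le> j" "j < c" "0 \<le> j'" "j' < c"
    by (auto simp: zw_cosets_hnf_lattice_eq_iff)
  have eq_if_dvd_diff: "u = v" if "0 \<le> u" "u < d" "0 \<le> v" "v < d" "d dvd u - v" for u v d :: int
    using that by (metis mod_eq_dvd_iff mod_pos_pos_trivial)
  have "j = j'"
    using bounds mn(2) by (intro eq_if_dvd_diff[of _ c]) auto
  with bounds mn have "i = i'"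
    by (intro eq_if_dvd_diff[of _ a]) auto
  with \<open>j = j'\<close> show "u = v"
    unfolding uv by simp
qed

lemma ideal_norm_hnf_lattice:
  assumes "a > 0" and "c > 0"
  shows "ideal_norm R (hnf_lattice a b c) = nat (a * c)"
proof -
  have "ideal_norm R (hnf_lattice a b c) = card ({0..<a} \<times> {0..<c})"
    unfolding ideal_norm_def hnf_lattice_cosets_eq[OF assms]
    by (rule card_image[OF inj_on_hnf_lattice_cosets])
  also have "\<dots> = nat (a * c)"
    using assms by (simp add: card_cartesian_product nat_mult_distrib)
  finally show ?thesis .
qed

lemma zw_in_hnf_lattice_int_iff:
  assumes "c \<noteq> 0"
  shows "zw x 0 \<in> hnf_lattice a b c \<longleftrightarrow> a dvd x"
  using assms unfolding zw_in_hnf_lattice_iff by (auto simp: dvd_def mult.commute)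

lemma generators_in_hnf_lattice: "zw a 0 \<in> hnf_lattice a b c" "zw b c \<in> hnf_lattice a b c"
  unfolding zw_in_hnf_lattice_iff
  by (rule exI[of _ 1], rule exI[of _ 0], simp) (rule exI[of _ 0], rule exI[of _ 1], simp)

lemma add_subgroup_coords:
  assumes "add_subgroup L"
  shows "add_subgroup {x. zw x 0 \<in> L}" and "add_subgroup {y. \<exists>x. zw x y \<in> L}"
  using assms unfolding add_subgroup_def
  by (auto simp flip: zw_0_0) (metis diff_zero zw_diff, metis zw_diff)

lemma add_subgroup_eq_hnf_lattice:
  assumes L: "add_subgroup L" "L \<subseteq> R"
  obtains a b c where "a \<ge> 0" "c \<ge> 0" "L = hnf_lattice a b c"
proof -
  define Gx where "Gx = {x. zw x 0 \<in> L}"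
  define Gy where "Gy = {y. \<exists>x. zw x y \<in> L}"
  have Gx: "Gx = range (times (Gcd Gx))"
    unfolding Gx_def by (rule add_subgroup_int_eq_multiples[OF add_subgroup_coords(1)[OF L(1)]])
  have Gy: "Gy = range (times (Gcd Gy))"
    unfolding Gy_def by (rule add_subgroup_int_eq_multiples[OF add_subgroup_coords(2)[OF L(1)]])
  define a where "a = Gcd Gx"
  define c where "c = Gcd Gy"
  have "a \<in> Gx" "c \<in> Gy"
    using Gx Gy unfolding a_def c_def by (metis mult.right_neutral rangeI)+
  then obtain b where a_in: "zw a 0 \<in> L" and b_in: "zw b c \<in> L"
    unfolding Gx_def Gy_def by blast
  have "L = hnf_lattice a b c"
  proof
    show "L \<subseteq> hnf_lattice a b c"
    proof
      fix z assume "z \<in> L"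
      moreover obtain x y where z: "z = zw x y"
        using \<open>z \<in> L\<close> L(2) by blast
      ultimately have "y \<in> Gy"
        unfolding Gy_def by blast
      then obtain n where n: "y = c * n"
        using Gy unfolding c_def by auto
      have "z - of_int n * zw b c \<in> L"
        using \<open>z \<in> L\<close> b_in L(1) by (intro add_subgroup_diff add_subgroup_of_int_mult)
      then have "x - n * b \<in> Gx"
        unfolding Gx_def z of_int_mult_zw zw_diff n by (simp add: mult.commute)
      then obtain m where "x - n * b = a * m"
        using Gx unfolding a_def by auto
      then show "z \<in> hnf_lattice a b c"
        unfolding z zw_in_hnf_lattice_iff n
        by (intro exI[of _ m] exI[of _ n]) (simp add: algebra_simps)
    qed
    have "group_closure {zw a 0, zw b c} \<subseteq> L"
      by (rule group_closure_least[OF L(1)]) (simp add: a_in b_in)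
    with hnf_lattice_subset_group_closure show "hnf_lattice a b c \<subseteq> L"
      by (rule subset_trans)
  qed
  moreover have "a \<ge> 0" "c \<ge> 0"
    unfolding a_def c_def by simp_all
  ultimately show thesis
    by (intro that)
qed

text \<open>\<^term>\<open>zw (x - p * y) (- y)\<close> is the conjugate of \<^term>\<open>zw x y\<close>, so the
  product is the norm.\<close>

lemma zw_conj_mult: "zw (x - p * y) (- y) * zw x y = zw (x\<^sup>2 - p * x * y + q * y\<^sup>2) 0"
  unfolding zw_mult by (simp add: power2_eq_square algebra_simps)

lemma ideal_contains_nonzero_int:
  assumes I: "ring_ideal R I" and nonzero: "I \<noteq> {0}"
  obtains N where "N \<noteq> 0" "zw N 0 \<in> I"
proof -
  obtain z where "z \<in> I" "z \<noteq> 0"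
    using nonzero I unfolding ring_ideal_def by blast
  moreover have "I \<subseteq> R"
    using I by (simp add: ring_ideal_def)
  ultimately obtain x y where "zw x y \<in> I" "zw x y \<noteq> 0"
    by (metis R_cases subsetD)
  define N where "N = x\<^sup>2 - p * x * y + q * y\<^sup>2"
  have "zw (x - p * y) (- y) \<noteq> 0"
    using \<open>zw x y \<noteq> 0\<close> by (auto simp: zw_eq_0_iff)
  with \<open>zw x y \<noteq> 0\<close> have "zw N 0 \<noteq> 0"
    unfolding N_def zw_conj_mult[symmetric] by simp
  then have "N \<noteq> 0"
    by auto
  moreover have "zw N 0 \<in> I"
    unfolding N_def zw_conj_mult[symmetric] using ideal_zw_mult[OF I \<open>zw x y \<in> I\<close>] .
  ultimately show thesis
    by (rule that)
qed

lemma ideal_eq_hnf_lattice_pos: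
  assumes I: "ring_ideal R I" and nonzero: "I \<noteq> {0}"
  obtains \<alpha> b c where "\<alpha> > 0" "c > 0" "I = hnf_lattice (c * \<alpha>) b c"
proof -
  have "I \<subseteq> R"
    using I by (simp add: ring_ideal_def)
  obtain a b c where "a \<ge> 0" "c \<ge> 0" and I_eq: "I = hnf_lattice a b c"
    using add_subgroup_eq_hnf_lattice[OF ideal_add_subgroup[OF I] \<open>I \<subseteq> R\<close>] .
  obtain N where "N \<noteq> 0" and N_in: "zw N 0 \<in> I"
    using ideal_contains_nonzero_int[OF I nonzero] .
  have "zw 0 N \<in> I"
    using ideal_zw_mult[OF I N_in, of 0 1] by (simp add: zw_mult)
  then have "c \<noteq> 0"
    using \<open>N \<noteq> 0\<close> unfolding I_eq zw_in_hnf_lattice_iff by auto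
  have "a \<noteq> 0"
    using N_in \<open>N \<noteq> 0\<close> \<open>c \<noteq> 0\<close> unfolding I_eq by (auto simp: zw_in_hnf_lattice_int_iff)
  have a_in: "zw a 0 \<in> I"
    unfolding I_eq by (rule generators_in_hnf_lattice)
  have "zw 0 a \<in> I"
    using ideal_zw_mult[OF I a_in, of 0 1] by (simp add: zw_mult)
  then obtain \<alpha> where a: "a = c * \<alpha>"
    unfolding I_eq zw_in_hnf_lattice_iff by (auto simp: mult.commute)
  with \<open>a \<ge> 0\<close> \<open>a \<noteq> 0\<close> \<open>c \<ge> 0\<close> \<open>c \<noteq> 0\<close> have "\<alpha> > 0" "c > 0"
    by (simp_all add: zero_le_mult_iff)
  with I_eq show thesis
    unfolding a by (intro that)
qed

text \<open>\<^term>\<open>\<beta>\<^sup>2 - p * \<beta> + q\<close> is the norm of \<^term>\<open>\<beta> + w\<close>.\<close>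

lemma ideal_eq_hnf_lattice:
  assumes I: "ring_ideal R I" and nonzero: "I \<noteq> {0}"
  obtains \<alpha> \<beta> c where "\<alpha> > 0" "c > 0" "\<alpha> dvd \<beta>\<^sup>2 - p * \<beta> + q"
    "I = hnf_lattice (c * \<alpha>) (c * \<beta>) c"
proof -
  obtain \<alpha> b c where "\<alpha> > 0" "c > 0" and I_eq: "I = hnf_lattice (c * \<alpha>) b c"
    using ideal_eq_hnf_lattice_pos[OF I nonzero] .
  have I_diff: "u - of_int k * v \<in> I" if "u \<in> I" "v \<in> I" for u v k
    using ideal_add_subgroup[OF I] that by (intro add_subgroup_diff add_subgroup_of_int_mult)
  have a_in: "zw (c * \<alpha>) 0 \<in> I" and b_in: "zw b c \<in> I"
    unfolding I_eq by (rule generators_in_hnf_lattice)+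
  have "zw 0 1 * zw (c * \<alpha>) 0 - of_int \<alpha> * zw b c \<in> I"
    using I_diff ideal_zw_mult[OF I a_in] b_in .
  then have "zw (- (\<alpha> * b)) 0 \<in> I"
    by (simp add: zw_mult of_int_mult_zw zw_diff mult.commute)
  then have "c * \<alpha> dvd \<alpha> * b"
    using \<open>c > 0\<close> unfolding I_eq by (simp add: zw_in_hnf_lattice_int_iff)
  then have "c dvd b"
    using \<open>\<alpha> > 0\<close> by (simp add: mult.commute[of c])
  then obtain \<beta> where b: "b = c * \<beta>" ..
  have "zw 0 1 * zw b c - of_int (\<beta> - p) * zw b c \<in> I"
    using I_diff ideal_zw_mult[OF I b_in] b_in .
  then have "zw (- (c * (\<beta>\<^sup>2 - p * \<beta> + q))) 0 \<in> I"
    by (simp add: b zw_mult of_int_mult_zw zw_diff power2_eq_square algebra_simps)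
  then have "c * \<alpha> dvd c * (\<beta>\<^sup>2 - p * \<beta> + q)"
    using \<open>c > 0\<close> unfolding I_eq by (simp add: zw_in_hnf_lattice_int_iff)
  then have "\<alpha> dvd \<beta>\<^sup>2 - p * \<beta> + q"
    using \<open>c > 0\<close> by simp
  with \<open>\<alpha> > 0\<close> \<open>c > 0\<close> show thesis
    using I_eq unfolding b by (intro that)
qed

lemma dvd_coord_det_products:
  assumes s: "\<beta>\<^sup>2 - p * \<beta> + q = \<alpha> * s" and t: "\<delta>\<^sup>2 - p * \<delta> + q = \<gamma> * t"
    and g: "g \<in> {u * v | u v. u \<in> {zw (c * \<alpha>) 0, zw (c * \<beta>) c}
                                \<and> v \<in> {zw (d * \<gamma>) 0, zw (d * \<delta>) d}}"
    and h: "h \<in> {u * v | u v. u \<in> {zw (c * \<alpha>) 0, zw (c * \<beta>) c}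
                                \<and> v \<in> {zw (d * \<gamma>) 0, zw (d * \<delta>) d}}"
  shows "c * \<alpha> * c * (d * \<gamma> * d) dvd coord_det g h"
proof -
  define D where "D = c * \<alpha> * c * (d * \<gamma> * d)"
  define P1 where "P1 = zw (c * \<alpha>) 0 * zw (d * \<gamma>) 0"
  define P2 where "P2 = zw (c * \<alpha>) 0 * zw (d * \<delta>) d"
  define P3 where "P3 = zw (c * \<beta>) c * zw (d * \<gamma>) 0"
  define P4 where "P4 = zw (c * \<beta>) c * zw (d * \<delta>) d"
  have products_eq: "{u * v | u v. u \<in> {u1, u2} \<and> v \<in> {v1, v2}} = {u1 * v1, u1 * v2, u2 * v1, u2 * v2}"
    for u1 u2 v1 v2 :: complex
    by blast
  have products: "g \<in> {P1, P2, P3, P4}" "h \<in> {P1, P2, P3, P4}"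
    using g h unfolding products_eq P1_def P2_def P3_def P4_def .
  have P_coords: "P1 = zw (c * \<alpha> * (d * \<gamma>)) 0" "P2 = zw (c * \<alpha> * (d * \<delta>)) (c * \<alpha> * d)"
    "P3 = zw (c * \<beta> * (d * \<gamma>)) (c * (d * \<gamma>))"
    "P4 = zw (c * \<beta> * (d * \<delta>) - q * c * d) (c * \<beta> * d + c * (d * \<delta>) - p * c * d)"
    unfolding P1_def P2_def P3_def P4_def zw_mult by (simp_all add: algebra_simps)
  have "coord_det P1 P2 = D * \<alpha>" "coord_det P1 P3 = D * \<gamma>" "coord_det P1 P4 = D * (\<beta> + \<delta> - p)"
    "coord_det P2 P3 = D * (\<delta> - \<beta>)"
    unfolding P_coords D_def by (simp_all add: algebra_simps)
  moreover have "coord_det P2 P4 = c * \<alpha> * c * d * d * (\<delta>\<^sup>2 - p * \<delta> + q)"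
    unfolding P_coords coord_det_zw power2_eq_square by algebra
  then have "coord_det P2 P4 = D * t"
    unfolding t D_def by (simp add: algebra_simps)
  moreover have "coord_det P3 P4 = d * \<gamma> * d * c * c * (\<beta>\<^sup>2 - p * \<beta> + q)"
    unfolding P_coords coord_det_zw power2_eq_square by algebra
  then have "coord_det P3 P4 = D * s"
    unfolding s D_def by (simp add: algebra_simps)
  ultimately have minors: "D dvd coord_det P1 P2" "D dvd coord_det P1 P3" "D dvd coord_det P1 P4"
    "D dvd coord_det P2 P3" "D dvd coord_det P2 P4" "D dvd coord_det P3 P4"
    by simp_all
  have diagonal: "coord_det P1 P1 = 0" "coord_det P2 P2 = 0" "coord_det P3 P3 = 0" "coord_det P4 P4 = 0"
    unfolding P_coords by simp_all
  from products have "D dvd coord_det g h \<or> D dvd coord_det h g"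
    by (elim insertE emptyE) (simp_all add: minors diagonal)
  moreover have "coord_det h g = - coord_det g h"
    using products unfolding P_coords by (intro coord_det_swap) auto
  ultimately show ?thesis
    unfolding D_def by auto
qed

lemma ring_ideal_R_ideal_mult:
  assumes "ring_ideal R I" "ring_ideal R J"
  shows "ring_ideal R (ideal_mult I J)"
proof (rule ring_ideal_ideal_mult[OF _ _ assms])
  show "0 \<in> R"
    using zw_in_R[of 0 0] by simp
  show "x + y \<in> R \<and> x * y \<in> R" if "x \<in> R" "y \<in> R" for x y
    using add_subgroup_add[OF add_subgroup_R that] mult_in_R[OF that] ..
qed

lemma ideal_norm_pos:
  assumes "ring_ideal R I" "I \<noteq> {0}"
  shows "ideal_norm R I > 0"
proof -
  obtain \<alpha> \<beta> c where "\<alpha> > 0" "c > 0" "I = hnf_lattice (c * \<alpha>) (c * \<beta>) c"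
    using ideal_eq_hnf_lattice[OF assms] by blast
  then show ?thesis
    by (simp add: ideal_norm_hnf_lattice)
qed

lemma ideal_norm_mult_dvd:
  assumes I: "ring_ideal R I" "I \<noteq> {0}" and J: "ring_ideal R J" "J \<noteq> {0}"
  shows "ideal_norm R I * ideal_norm R J dvd ideal_norm R (ideal_mult I J)"
proof -
  obtain \<alpha> \<beta> c where I_pos: "\<alpha> > 0" "c > 0" and I_dvd: "\<alpha> dvd \<beta>\<^sup>2 - p * \<beta> + q"
    and I_eq: "I = hnf_lattice (c * \<alpha>) (c * \<beta>) c"
    using ideal_eq_hnf_lattice[OF I] .
  from I_dvd obtain s where s: "\<beta>\<^sup>2 - p * \<beta> + q = \<alpha> * s" ..
  obtain \<gamma> \<delta> d where J_pos: "\<gamma> > 0" "d > 0" and J_dvd: "\<gamma> dvd \<delta>\<^sup>2 - p * \<delta> + q"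
    and J_eq: "J = hnf_lattice (d * \<gamma>) (d * \<delta>) d"
    using ideal_eq_hnf_lattice[OF J] .
  from J_dvd obtain t where t: "\<delta>\<^sup>2 - p * \<delta> + q = \<gamma> * t" ..
  from ring_ideal_R_ideal_mult[OF I(1) J(1)] ideal_mult_neq_zero[OF I J]
  obtain \<alpha>' \<beta>' c' where "\<alpha>' > 0" "c' > 0" and "\<alpha>' dvd \<beta>'\<^sup>2 - p * \<beta>' + q"
    and IJ_eq: "ideal_mult I J = hnf_lattice (c' * \<alpha>') (c' * \<beta>') c'"
    by (rule ideal_eq_hnf_lattice)
  let ?P = "{u * v | u v. u \<in> {zw (c * \<alpha>) 0, zw (c * \<beta>) c}
                         \<and> v \<in> {zw (d * \<gamma>) 0, zw (d * \<delta>) d}}"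
  have "ideal_mult I J \<subseteq> group_closure ?P"
    unfolding I_eq J_eq
    by (intro ideal_mult_subset_group_closure hnf_lattice_subset_group_closure)
  then have IJ_generators: "zw (c' * \<alpha>') 0 \<in> group_closure ?P" "zw (c' * \<beta>') c' \<in> group_closure ?P"
    unfolding IJ_eq by (meson generators_in_hnf_lattice subsetD)+
  have "?P \<subseteq> R"
    using mult_in_R by auto
  then have "c * \<alpha> * c * (d * \<gamma> * d) dvd coord_det (zw (c' * \<alpha>') 0) (zw (c' * \<beta>') c')"
    by (rule dvd_coord_det_group_closure[OF _ dvd_coord_det_products[OF s t] IJ_generators])
  then have "c * \<alpha> * c * (d * \<gamma> * d) dvd c' * \<alpha>' * c'"
    by simp
  moreover have "ideal_norm R I = nat (c * \<alpha> * c)" "ideal_norm R J = nat (d * \<gamma> * d)"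
    unfolding I_eq J_eq using I_pos J_pos by (simp_all add: ideal_norm_hnf_lattice)
  moreover have "ideal_norm R (ideal_mult I J) = nat (c' * \<alpha>' * c')"
    unfolding IJ_eq using \<open>\<alpha>' > 0\<close> \<open>c' > 0\<close> by (simp add: ideal_norm_hnf_lattice)
  ultimately show ?thesis
    using I_pos J_pos by (simp add: nat_mult_distrib[symmetric] nat_dvd_iff)
qed

end

section \<open>Orders in quadratic fields have the form \<int>[w]\<close>

lemma rat_in_Ints_if_scaled_powers_in_Ints:
  fixes y :: rat and D :: int
  assumes "D \<noteq> 0" and powers: "\<And>n. of_int D * y ^ n \<in> \<int>"
  shows "y \<in> \<int>"
proof -
  obtain a b where ab: "quotient_of y = (a, b)"
    by (cases "quotient_of y")
  have "b > 0" "coprime a b" and y: "y = of_int a / of_int b"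
    using ab by (simp_all add: quotient_of_denom_pos quotient_of_coprime quotient_of_div)
  have "b ^ n dvd \<bar>D\<bar>" for n
  proof -
    obtain k where "of_int D * y ^ n = of_int k"
      using powers by (auto elim: Ints_cases)
    then have "D * a ^ n = k * b ^ n"
      using \<open>b > 0\<close> unfolding y by (simp add: power_divide field_simps flip: of_int_power of_int_mult)
    then have "b ^ n dvd D * a ^ n"
      by simp
    moreover have "coprime (b ^ n) (a ^ n)"
      using \<open>coprime a b\<close> by (simp add: coprime_commute)
    ultimately show ?thesis
      by (simp add: coprime_dvd_mult_left_iff)
  qed
  have "b = 1"
  proof (rule ccontr)
    assume "b \<noteq> 1"
    with \<open>b > 0\<close> have "2 ^ n \<le> b ^ n" for n :: nat
      by (intro power_mono) auto
    also have "b ^ n \<le> \<bar>D\<bar>" for n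
      using \<open>b ^ n dvd \<bar>D\<bar>\<close> \<open>D \<noteq> 0\<close> by (simp add: zdvd_imp_le)
    finally have "2 ^ nat \<bar>D\<bar> \<le> \<bar>D\<bar>" .
    moreover have "int (nat \<bar>D\<bar>) < 2 ^ nat \<bar>D\<bar>"
      using less_exp[of "nat \<bar>D\<bar>"] by (metis of_nat_less_iff of_nat_numeral of_nat_power)
    ultimately show False
      by simp
  qed
  then show "y \<in> \<int>"
    using y by simp
qed

definition frac_lattice :: "'a::field_char_0 \<Rightarrow> int \<Rightarrow> 'a set" where
  "frac_lattice w D = {(of_int X + of_int Y * w) / of_int D | X Y. True}"

lemma add_subgroup_frac_lattice: "add_subgroup (frac_lattice w D)"
proof -
  have "(of_int X + of_int Y * w) / of_int D - (of_int X' + of_int Y' * w) / of_int D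
      = (of_int (X - X') + of_int (Y - Y') * w) / of_int D" for X Y X' Y'
    by (simp add: diff_divide_distrib algebra_simps)
  moreover have "0 = (of_int 0 + of_int 0 * w) / of_int D"
    by simp
  ultimately show ?thesis
    unfolding add_subgroup_def frac_lattice_def by blast
qed

lemma frac_lattice_subset_mult:
  assumes "E \<noteq> 0"
  shows "frac_lattice w D \<subseteq> frac_lattice w (D * E)"
proof
  fix z assume "z \<in> frac_lattice w D"
  then obtain X Y where "z = (of_int X + of_int Y * w) / of_int D"
    unfolding frac_lattice_def by blast
  also have "\<dots> = (of_int E * (of_int X + of_int Y * w)) / (of_int E * of_int D)"
    using assms by simp
  also have "\<dots> = (of_int (X * E) + of_int (Y * E) * w) / of_int (D * E)"
    by (simp add: algebra_simps)
  finally have "z = (of_int (X * E) + of_int (Y * E) * w) / of_int (D * E)" .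
  then show "z \<in> frac_lattice w (D * E)"
    unfolding frac_lattice_def by blast
qed

lemma rat_coords_in_frac_lattice:
  obtains D where "D > 0" "of_rat a + of_rat b * w \<in> frac_lattice w D"
proof -
  obtain X d where a: "a = of_int X / of_int d" "d > 0"
    by (metis prod.exhaust quotient_of_denom_pos quotient_of_div)
  obtain Y e where b: "b = of_int Y / of_int e" "e > 0"
    by (metis prod.exhaust quotient_of_denom_pos quotient_of_div)
  have "of_rat a + of_rat b * w = (of_int (X * e) + of_int (Y * d) * w) / of_int (d * e)"
    unfolding a(1) b(1) using a(2) b(2) by (simp add: of_rat_divide field_simps)
  then have "of_rat a + of_rat b * w \<in> frac_lattice w (d * e)"
    unfolding frac_lattice_def by blast
  with a b show thesis
    by (intro that[of "d * e"]) auto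
qed

lemma finite_subset_frac_lattice:
  assumes "finite T" "T \<subseteq> {of_rat a + of_rat b * w | a b. True}"
  obtains D where "D > 0" "T \<subseteq> frac_lattice w D"
  using assms
proof (induction T arbitrary: thesis rule: finite_induct)
  case empty
  then show ?case
    by (metis empty_subsetI zero_less_one)
next
  case (insert z T)
  obtain D where D: "D > 0" "T \<subseteq> frac_lattice w D"
    using insert by blast
  obtain a b where "z = of_rat a + of_rat b * w"
    using insert.prems by blast
  then obtain E where E: "E > 0" "z \<in> frac_lattice w E"
    using rat_coords_in_frac_lattice by metis
  have "T \<subseteq> frac_lattice w (D * E)" "z \<in> frac_lattice w (E * D)"
    using D E frac_lattice_subset_mult[of E w D] frac_lattice_subset_mult[of D w E] by auto
  then show ?case
    using D E insert.prems by (intro insert.prems(1)[of "D * E"]) (auto simp: mult.commute)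
qed

lemma rat_in_frac_lattice_imp_Ints:
  fixes w :: "'a::field_char_0"
  assumes "w \<notin> \<rat>" "D \<noteq> 0" "of_rat r \<in> frac_lattice w D"
  shows "of_int D * r \<in> \<int>"
proof -
  obtain X Y where "of_rat r = (of_int X + of_int Y * w) / of_int D"
    using assms(3) unfolding frac_lattice_def by blast
  with assms(2) have "of_rat (of_int D * r) + of_rat 0 * w = of_rat (of_int X) + of_rat (of_int Y) * w"
    by (simp add: of_rat_mult field_simps)
  then have "of_int D * r = of_int X"
    using of_rat_coords_eq_iff[OF assms(1)] by blast
  then show ?thesis
    by simp
qed

lemma frac_lattice_elem_notin_Rats:
  fixes w :: "'a::field_char_0"
  assumes "w \<notin> \<rat>" "Y \<noteq> 0" "D \<noteq> 0"
  shows "(of_int X + of_int Y * w) / of_int D \<notin> \<rat>"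
proof
  assume "(of_int X + of_int Y * w) / of_int D \<in> \<rat>"
  then obtain r where "of_rat r + of_rat 0 * w = of_rat (of_int X / of_int D) + of_rat (of_int Y / of_int D) * w"
    by (auto simp: of_rat_divide add_divide_distrib elim: Rats_cases)
  then have "of_int Y / of_int D = (0 :: rat)"
    by (simp only: of_rat_coords_eq_iff[OF assms(1)])
  with assms(2,3) show False
    by simp
qed

locale quadratic_field_order =
  fixes K R :: "complex set" and w0 :: complex
  assumes w0_irrational: "w0 \<notin> \<rat>"
    and K_eq: "K = {of_rat a + of_rat b * w0 | a b. True}"
    and order: "is_order K R"
begin

lemma R_subset_K: "R \<subseteq> K"
  and one_in_R: "1 \<in> R"
  and mult_in_R: "x \<in> R \<Longrightarrow> y \<in> R \<Longrightarrow> x * y \<in> R"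
  and R_fractions: "x \<in> K \<Longrightarrow> \<exists>a\<in>R. \<exists>b\<in>R. b \<noteq> 0 \<and> x = a / b"
  using order unfolding is_order_def by auto

lemma add_subgroup_R: "add_subgroup R"
  using order unfolding is_order_def add_subgroup_def
  by (metis diff_conv_add_uminus)

lemma of_int_in_R: "of_int k \<in> R"
  using add_subgroup_of_int_mult[OF add_subgroup_R one_in_R] by simp

lemma R_subset_frac_lattice:
  obtains D where "D > 0" "R \<subseteq> frac_lattice w0 D"
proof -
  obtain S where S: "finite S" "S \<subseteq> R" and R_span: "R = {(\<Sum>s\<in>S. of_int (c s) * s) | c. True}"
    using order unfolding is_order_def by blast
  obtain D where D: "D > 0" "S \<subseteq> frac_lattice w0 D"
    using finite_subset_frac_lattice[OF S(1)] S(2) R_subset_K unfolding K_eq by blast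
  have "R \<subseteq> frac_lattice w0 D"
    using D(2) unfolding R_span
    by (auto intro!: add_subgroup_sum add_subgroup_of_int_mult add_subgroup_frac_lattice)
  with D(1) show thesis
    by (rule that)
qed

lemma rat_in_R_imp_Ints:
  assumes "of_rat y \<in> R"
  shows "y \<in> \<int>"
proof -
  obtain D where "D > 0" and D: "R \<subseteq> frac_lattice w0 D"
    using R_subset_frac_lattice .
  show ?thesis
  proof (rule rat_in_Ints_if_scaled_powers_in_Ints)
    show "D \<noteq> 0"
      using \<open>D > 0\<close> by simp
    fix n
    have "of_rat (y ^ n) \<in> R"
      using assms one_in_R mult_in_R by (induction n) (auto simp: of_rat_mult)
    then show "of_int D * y ^ n \<in> \<int>"
      using D \<open>D > 0\<close> by (intro rat_in_frac_lattice_imp_Ints[OF w0_irrational]) auto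
  qed
qed

lemma R_not_subset_Rats: "\<not> R \<subseteq> \<rat>"
proof
  assume "R \<subseteq> \<rat>"
  have "w0 \<in> K"
    unfolding K_eq by (rule CollectI, rule exI[of _ 0], rule exI[of _ 1]) simp
  then obtain a b where "a \<in> R" "b \<in> R" "w0 = a / b"
    using R_fractions by blast
  moreover from \<open>a \<in> R\<close> \<open>b \<in> R\<close> \<open>R \<subseteq> \<rat>\<close> have "a \<in> \<rat>" "b \<in> \<rat>"
    by auto
  ultimately have "w0 \<in> \<rat>"
    by simp
  with w0_irrational show False ..
qed

lemma add_subgroup_frac_second_coords:
  "add_subgroup {Y. \<exists>X. (of_int X + of_int Y * w0) / of_int D \<in> R}"
  unfolding add_subgroup_def
proof (intro conjI ballI)
  have "(of_int 0 + of_int 0 * w0) / of_int D \<in> R"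
    using add_subgroup_R by (simp add: add_subgroup_def)
  then show "0 \<in> {Y. \<exists>X. (of_int X + of_int Y * w0) / of_int D \<in> R}"
    by blast
  fix Y Y' assume "Y \<in> {Y. \<exists>X. (of_int X + of_int Y * w0) / of_int D \<in> R}"
    and "Y' \<in> {Y. \<exists>X. (of_int X + of_int Y * w0) / of_int D \<in> R}"
  then obtain X X' where "(of_int X + of_int Y * w0) / of_int D \<in> R"
    "(of_int X' + of_int Y' * w0) / of_int D \<in> R"
    by blast
  then have "(of_int X + of_int Y * w0) / of_int D - (of_int X' + of_int Y' * w0) / of_int D \<in> R"
    by (rule add_subgroup_diff[OF add_subgroup_R])
  then have "(of_int (X - X') + of_int (Y - Y') * w0) / of_int D \<in> R"
    by (simp add: diff_divide_distrib algebra_simps)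
  then show "Y - Y' \<in> {Y. \<exists>X. (of_int X + of_int Y * w0) / of_int D \<in> R}"
    by blast
qed

lemma frac_second_coords_cyclic:
  assumes D: "D > 0" "R \<subseteq> frac_lattice w0 D"
  obtains g X0 where "g \<noteq> 0" "(of_int X0 + of_int g * w0) / of_int D \<in> R"
    "R \<subseteq> {(of_int X + of_int (g * n) * w0) / of_int D | X n. True}"
proof -
  define Gy where "Gy = {Y. \<exists>X. (of_int X + of_int Y * w0) / of_int D \<in> R}"
  have Gy: "Gy = range (times (Gcd Gy))"
    unfolding Gy_def by (rule add_subgroup_int_eq_multiples[OF add_subgroup_frac_second_coords])
  define g where "g = Gcd Gy"
  have R_cases: "z \<in> {(of_int X + of_int (g * n) * w0) / of_int D | X n. True}" if "z \<in> R" for z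
  proof -
    obtain X Y where z: "z = (of_int X + of_int Y * w0) / of_int D"
      using D(2) \<open>z \<in> R\<close> unfolding frac_lattice_def by blast
    with \<open>z \<in> R\<close> have "Y \<in> Gy"
      unfolding Gy_def by blast
    then obtain n where "Y = g * n"
      using Gy unfolding g_def by auto
    then show ?thesis
      unfolding z by blast
  qed
  then have R_subset: "R \<subseteq> {(of_int X + of_int (g * n) * w0) / of_int D | X n. True}"
    by blast
  have "g \<noteq> 0"
  proof
    assume "g = 0"
    have "R \<subseteq> \<rat>"
    proof
      fix z assume "z \<in> R"
      then obtain X where "z = of_rat (of_int X / of_int D)"
        using R_subset \<open>g = 0\<close> by (fastforce simp: of_rat_divide)
      then show "z \<in> \<rat>"
        by simp
    qed
    with R_not_subset_Rats show False ..
  qed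
  have "g \<in> Gy"
    using Gy unfolding g_def by (metis mult.right_neutral rangeI)
  then obtain X0 where "(of_int X0 + of_int g * w0) / of_int D \<in> R"
    unfolding Gy_def by blast
  with \<open>g \<noteq> 0\<close> show thesis
    using R_subset by (rule that)
qed

lemma R_eq_int_span_1_w:
  obtains w where "w \<notin> \<rat>" "R = {of_int x + of_int y * w | x y. True}"
proof -
  obtain D where "D > 0" and D: "R \<subseteq> frac_lattice w0 D"
    using R_subset_frac_lattice .
  obtain g X0 where "g \<noteq> 0" and w_in_R: "(of_int X0 + of_int g * w0) / of_int D \<in> R"
    and R_cases: "R \<subseteq> {(of_int X + of_int (g * n) * w0) / of_int D | X n. True}"
    using frac_second_coords_cyclic[OF \<open>D > 0\<close> D] .
  define w where "w = (of_int X0 + of_int g * w0) / of_int D"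
  have "w \<notin> \<rat>"
    unfolding w_def using frac_lattice_elem_notin_Rats[OF w0_irrational] \<open>g \<noteq> 0\<close> \<open>D > 0\<close> by simp
  moreover have "R = {of_int x + of_int y * w | x y. True}"
  proof
    show "{of_int x + of_int y * w | x y. True} \<subseteq> R"
      using add_subgroup_add[OF add_subgroup_R of_int_in_R mult_in_R[OF of_int_in_R]] w_in_R
      unfolding w_def by blast
    show "R \<subseteq> {of_int x + of_int y * w | x y. True}"
    proof
      fix z assume "z \<in> R"
      with R_cases obtain X n where z: "z = (of_int X + of_int (g * n) * w0) / of_int D"
        by blast
      have "z - of_int n * w = (of_int (X - n * X0) + of_int 0 * w0) / of_int D"
        unfolding z w_def using \<open>D > 0\<close> by (simp add: field_simps)
      also have "\<dots> = of_rat (of_int (X - n * X0) / of_int D)"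
        by (simp only: of_rat_divide of_rat_of_int_eq of_int_0 mult_zero_left add_0_right)
      finally have z_minus: "z - of_int n * w = of_rat (of_int (X - n * X0) / of_int D)" .
      moreover have "z - of_int n * w \<in> R"
        using \<open>z \<in> R\<close> add_subgroup_diff[OF add_subgroup_R] mult_in_R[OF of_int_in_R w_in_R]
        unfolding w_def by blast
      ultimately have "of_int (X - n * X0) / of_int D \<in> (\<int> :: rat set)"
        by (intro rat_in_R_imp_Ints) simp
      then obtain m where "of_int (X - n * X0) / of_int D = (of_int m :: rat)"
        by (auto elim: Ints_cases)
      with z_minus have "z = of_int m + of_int n * w"
        by (simp add: algebra_simps)
      then show "z \<in> {of_int x + of_int y * w | x y. True}"
        by blast
    qed
  qed
  ultimately show thesis
    by (rule that)
qed

lemma quadratic_order_exists: "\<exists>w p q. quadratic_order R w p q"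
proof -
  obtain w where "w \<notin> \<rat>" and R_eq: "R = {of_int x + of_int y * w | x y. True}"
    using R_eq_int_span_1_w .
  have "of_int 0 + of_int 1 * w \<in> R"
    unfolding R_eq by blast
  then have "w \<in> R"
    by simp
  then have "w * w \<in> R"
    using mult_in_R by blast
  then obtain x y where "w * w = of_int x + of_int y * w"
    unfolding R_eq by blast
  then have "w\<^sup>2 + of_int (- y) * w + of_int (- x) = 0"
    by (simp add: power2_eq_square)
  with \<open>w \<notin> \<rat>\<close> R_eq have "quadratic_order R w (- y) (- x)"
    by unfold_locales
  then show ?thesis
    by blast
qed

end

lemma quadratic_order_of_order:
  assumes "quadratic_field K" "is_order K R"
  obtains w p q where "quadratic_order R w p q"
proof -
  obtain w0 where "w0 \<notin> \<rat>" "K = {of_rat a + of_rat b * w0 | a b. True}"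
    using assms(1) unfolding quadratic_field_def by blast
  with assms(2) have "quadratic_field_order K R w0"
    by unfold_locales
  then show thesis
    using quadratic_field_order.quadratic_order_exists that by blast
qed

theorem theorem3p3:
  fixes K R I J :: "complex set"
  assumes "quadratic_field K"
    and "is_order K R"
    and "ring_ideal R I" and "I \<noteq> {0}"
    and "ring_ideal R J" and "J \<noteq> {0}"
  shows "ideal_norm R (ideal_mult I J) \<ge> ideal_norm R I * ideal_norm R J"
proof -
  obtain w p q where "quadratic_order R w p q"
    using quadratic_order_of_order[OF assms(1,2)] .
  then interpret quadratic_order R w p q .
  have "ideal_norm R (ideal_mult I J) > 0"
    using ideal_norm_pos[OF ring_ideal_R_ideal_mult[OF assms(3,5)] ideal_mult_neq_zero[OF assms(3-6)]] .
  then show ?thesis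
    using ideal_norm_mult_dvd[OF assms(3-6)] by (simp add: dvd_imp_le)
qed

end
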